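(* Let $d\ge 2$ and $N\ge 2$ be integers, let $X=\{x^1,\dots,x^N\}\subseteq\mathbb{R}^d$, and let $C\subseteq\mathbb{R}^d$ be a proper closed convex cone. Then: (i) For every $w\in C^+\setminus\{0\}$, both $r_{X,w}$ and $r_{X,C}$ are ranking functions on $X$ with respect to $\leq_C$: for all $y,z\in X$, $y\leq_C z$ implies $r_{X,w}(y)\le r_{X,w}(z)$ and $r_{X,C}(y)\le r_{X,C}(z)$. Both are moreover strict: if $\operatorname{int} C\neq\varnothing$, then for all $y,z\in X$, $y<_C z$ implies $r_{X,w}(y)<r_{X,w}(z)$ and $r_{X,C}(y)<r_{X,C}(z)$. (ii) For every invertible matrix $A\in\mathbb{R}^{d\times d}$ and every $b\in\mathbb{R}^d$, $$\forall z\in\mathbb{R}^d:\quad r_{AX+b,\,AC}(Az+b)=r_{X,C}(z),$$ where $AX+b=\{Ax^1+b,\dots,Ax^N+b\}$ and $AC=\{Ac\mid c\in C\}$. (iii) If $D\subseteq\mathbb{R}^d$ is a closed convex cone with $C\subseteq D$, then $r_{X,C}(z)\le r_{X,D}(z)$ for all $z\in\mathbb{R}^d$. In particular, $r_{X,C}(z)\le r_{X,H^+(w)}(z)$ for all $w\in C^+$ and all $z\in\mathbb{R}^d$.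
   Context: A proper closed convex cone $C\subseteq\mathbb{R}^d$ is a closed set with $sC=C$ for all $s\ge 0$, $C+C=C$, and $C\notin\{\varnothing,\mathbb{R}^d\}$. It induces the preorder $y\leq_C z$ iff $z-y\in C$, and (when $\operatorname{int} C\neq\varnothing$) $y<_C z$ iff $z-y\in\operatorname{int} C$. The dual cone of a cone $K$ is $K^+=\{v\in\mathbb{R}^d\mid \forall z\in K: v^\top z\ge 0\}$. For $w\in\mathbb{R}^d$, $H^+(w)=\{z\in\mathbb{R}^d\mid w^\top z\ge 0\}$ (so $H^+(0)=\mathbb{R}^d$). For a finite set $X\subseteq\mathbb{R}^d$, a nonzero $w$, and a closed convex cone $K$, define for $z\in\mathbb{R}^d$ $$r_{X,w}(z)=\#\{x\in X\mid x\in z-H^+(w)\}=\#\{x\in X\mid w^\top x\le w^\top z\},\qquad r_{X,K}(z)=\min_{w\in K^+}\#\{x\in X\mid x\in z-H^+(w)\},$$ where $\#$ denotes cardinality. A ranking function on $X$ with respect to $\leq_C$ is a map $r:X\to\mathbb{R}$ with $y\leq_C z\Rightarrow r(y)\le r(z)$ for $y,z\in X$; it is strict if $y<_C z\Rightarrow r(y)<r(z)$. *)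

theory Defs
  imports "HOL-Analysis.Analysis"
begin

definition proper_closed_convex_cone :: "('a::euclidean_space) set \<Rightarrow> bool" where
  "proper_closed_convex_cone C \<longleftrightarrow> closed C \<and> convex_cone C \<and> C \<noteq> {} \<and> C \<noteq> UNIV"

definition closed_convex_cone :: "('a::euclidean_space) set \<Rightarrow> bool" where
  "closed_convex_cone C \<longleftrightarrow> closed C \<and> convex_cone C \<and> C \<noteq> {}"

definition dual_cone :: "('a::euclidean_space) set \<Rightarrow> 'a set" where
  "dual_cone K = {v. \<forall>z\<in>K. v \<bullet> z \<ge> 0}"

definition halfspace_plus :: "'a::euclidean_space \<Rightarrow> 'a set" where
  "halfspace_plus w = {z. w \<bullet> z \<ge> 0}"

definition rank_w :: "'a::euclidean_space set \<Rightarrow> 'a \<Rightarrow> 'a \<Rightarrow> nat" where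
  "rank_w X w z = card {x\<in>X. w \<bullet> x \<le> w \<bullet> z}"

definition rank_K :: "'a::euclidean_space set \<Rightarrow> 'a set \<Rightarrow> 'a \<Rightarrow> nat" where
  "rank_K X K z = Min ((\<lambda>w. rank_w X w z) ` dual_cone K)"

definition ranking_function :: "'a::euclidean_space set \<Rightarrow> 'a set \<Rightarrow> ('a \<Rightarrow> real) \<Rightarrow> bool" where
  "ranking_function X C r \<longleftrightarrow> (\<forall>y\<in>X. \<forall>z\<in>X. z - y \<in> C \<longrightarrow> r y \<le> r z)"

definition strict_ranking_function :: "'a::euclidean_space set \<Rightarrow> 'a set \<Rightarrow> ('a \<Rightarrow> real) \<Rightarrow> bool" where
  "strict_ranking_function X C r \<longleftrightarrow> (\<forall>y\<in>X. \<forall>z\<in>X. z - y \<in> interior C \<longrightarrow> r y < r z)"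

end

theory Submission
  imports Defs
begin

(* For w in C^+, z - y in C gives w.y <= w.z, so the half-space count r_{X,w} is monotone;
   if moreover w /= 0 and z - y is interior, the inequality is strict, and z in X is counted at
   z but not at y. The minimum r_{X,C} of these counts is attained at a nonzero w whenever C^+
   has one (r_{X,0} = #X is the largest count), so it inherits both properties. Under
   x |-> A x + b the half-space of v at A z + b pulls back to that of A^T v at z, and v |-> A^T v
   maps (A C)^+ onto C^+. Finally C <= D gives D^+ <= C^+, and C <= H^+(w) for w in C^+. *)

lemma zero_in_dual_cone: "0 \<in> dual_cone K"
  by (simp add: dual_cone_def)

lemma dual_cone_antimono: "C \<subseteq> D \<Longrightarrow> dual_cone D \<subseteq> dual_cone C"
  by (auto simp: dual_cone_def)

lemma dual_cone_inner_mono: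
  assumes "w \<in> dual_cone C" "z - y \<in> C"
  shows "w \<bullet> y \<le> w \<bullet> z"
  using assms by (auto simp: dual_cone_def inner_diff_right)

lemma dual_cone_inner_pos_interior:
  assumes w: "w \<in> dual_cone C" "w \<noteq> 0" and x: "x \<in> interior C"
  shows "0 < w \<bullet> x"
proof -
  obtain e where e: "e > 0" "ball x e \<subseteq> C"
    using x by (meson interior_subset mem_interior subset_trans)
  define u where "u = x - (e / 2 / norm w) *\<^sub>R w"
  have "dist x u < e"
    using e w by (simp add: u_def dist_norm)
  then have "0 \<le> w \<bullet> u"
    using e w by (auto simp: dual_cone_def)
  also have "w \<bullet> u = w \<bullet> x - e / 2 * norm w"
    using w by (simp add: u_def inner_diff_right power2_norm_eq_inner[symmetric] power2_eq_square)
  finally show ?thesis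
    using e w by (smt (verit) mult_pos_pos zero_less_norm_iff half_gt_zero)
qed

lemma dual_cone_inner_strict_mono:
  assumes "w \<in> dual_cone C" "w \<noteq> 0" "z - y \<in> interior C"
  shows "w \<bullet> y < w \<bullet> z"
  using dual_cone_inner_pos_interior[OF assms] by (simp add: inner_diff_right)

lemma subset_halfspace_plus_of_dual_cone: "w \<in> dual_cone C \<Longrightarrow> C \<subseteq> halfspace_plus w"
  by (auto simp: dual_cone_def halfspace_plus_def inner_commute)

lemma dual_cone_matrix_image:
  fixes A :: "real ^ 'n ^ 'n"
  shows "dual_cone ((*v) A ` C) = {v. v v* A \<in> dual_cone C}"
  by (auto simp: dual_cone_def dot_lmul_matrix)

lemma rank_w_le_card: "finite X \<Longrightarrow> rank_w X w z \<le> card X"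
  unfolding rank_w_def by (intro card_mono) auto

lemma rank_w_zero: "rank_w X 0 z = card X"
  by (simp add: rank_w_def)

lemma rank_w_mono: "finite X \<Longrightarrow> w \<bullet> y \<le> w \<bullet> z \<Longrightarrow> rank_w X w y \<le> rank_w X w z"
  unfolding rank_w_def by (intro card_mono) auto

lemma rank_w_strict_mono:
  "finite X \<Longrightarrow> z \<in> X \<Longrightarrow> w \<bullet> y < w \<bullet> z \<Longrightarrow> rank_w X w y < rank_w X w z"
  unfolding rank_w_def by (intro psubset_card_mono) force+

lemma rank_w_inj_image:
  assumes "inj g" and "\<And>x. v \<bullet> g x \<le> v \<bullet> g z \<longleftrightarrow> u \<bullet> x \<le> u \<bullet> z"
  shows "rank_w (g ` X) v (g z) = rank_w X u z"
proof -
  have "{x'\<in>g ` X. v \<bullet> x' \<le> v \<bullet> g z} = g ` {x\<in>X. u \<bullet> x \<le> u \<bullet> z}"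
    using assms(2) by auto
  then show ?thesis
    unfolding rank_w_def by (simp add: card_image inj_on_subset[OF assms(1)])
qed

lemma finite_rank_w_image: "finite X \<Longrightarrow> finite ((\<lambda>w. rank_w X w z) ` S)"
  by (rule finite_subset[of _ "{..card X}"]) (auto simp: rank_w_le_card)

lemma rank_K_le_rank_w: "finite X \<Longrightarrow> w \<in> dual_cone K \<Longrightarrow> rank_K X K z \<le> rank_w X w z"
  unfolding rank_K_def by (intro Min_le finite_rank_w_image) auto

lemma rank_K_attained:
  assumes "finite X"
  obtains w where "w \<in> dual_cone K" "rank_K X K z = rank_w X w z"
proof -
  have "rank_K X K z \<in> (\<lambda>w. rank_w X w z) ` dual_cone K"
    unfolding rank_K_def using zero_in_dual_cone[of K] by (intro Min_in finite_rank_w_image assms) auto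
  then show ?thesis
    using that by blast
qed

lemma rank_K_attained_nonzero:
  assumes "finite X" "w\<^sub>0 \<in> dual_cone K" "w\<^sub>0 \<noteq> 0"
  obtains w where "w \<in> dual_cone K" "w \<noteq> 0" "rank_K X K z = rank_w X w z"
proof -
  obtain w where w: "w \<in> dual_cone K" "rank_K X K z = rank_w X w z"
    using rank_K_attained[OF assms(1)] .
  show ?thesis
  proof (cases "w = 0")
    case True
    have "rank_w X w\<^sub>0 z \<le> rank_K X K z"
      using w True rank_w_le_card[OF assms(1)] by (simp add: rank_w_zero)
    then show ?thesis
      using that assms rank_K_le_rank_w[OF assms(1,2)] by (metis le_antisym)
  qed (use that w in blast)
qed

lemma rank_K_mono_cone: "finite X \<Longrightarrow> C \<subseteq> D \<Longrightarrow> rank_K X C z \<le> rank_K X D z"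
  by (metis dual_cone_antimono rank_K_attained rank_K_le_rank_w subsetD)

lemma rank_K_mono_of_rank_w_mono:
  assumes "finite X" "\<And>w. w \<in> dual_cone K \<Longrightarrow> rank_w X w y \<le> rank_w X w z"
  shows "rank_K X K y \<le> rank_K X K z"
proof -
  obtain w where w: "w \<in> dual_cone K" "rank_K X K z = rank_w X w z"
    using rank_K_attained[OF assms(1)] .
  show ?thesis
    using rank_K_le_rank_w[OF assms(1) w(1), of y] assms(2)[OF w(1)] w(2) by linarith
qed

lemma rank_K_strict_mono_of_rank_w_strict_mono:
  assumes "finite X" "w\<^sub>0 \<in> dual_cone K" "w\<^sub>0 \<noteq> 0"
    and "\<And>w. w \<in> dual_cone K \<Longrightarrow> w \<noteq> 0 \<Longrightarrow> rank_w X w y < rank_w X w z"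
  shows "rank_K X K y < rank_K X K z"
proof -
  obtain w where w: "w \<in> dual_cone K" "w \<noteq> 0" "rank_K X K z = rank_w X w z"
    using rank_K_attained_nonzero[OF assms(1-3)] .
  show ?thesis
    using rank_K_le_rank_w[OF assms(1) w(1), of y] assms(4)[OF w(1,2)] w(3) by linarith
qed

lemma rank_K_affine_image:
  fixes A :: "real ^ 'n ^ 'n"
  assumes "finite X" "invertible A"
  shows "rank_K ((\<lambda>x. A *v x + b) ` X) ((*v) A ` C) (A *v z + b) = rank_K X C z"
proof -
  obtain B where AB: "A ** B = mat 1" "B ** A = mat 1"
    using assms(2) invertible_def by blast
  have "inj (\<lambda>x. A *v x + b)"
    by (rule injI) (metis AB(2) add_right_cancel matrix_vector_mul_assoc matrix_vector_mul_lid)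
  then have counts: "rank_w ((\<lambda>x. A *v x + b) ` X) v (A *v z + b) = rank_w X (v v* A) z" for v
    by (rule rank_w_inj_image) (simp add: dot_lmul_matrix inner_add_right)
  have transpose_onto: "(\<lambda>v. v v* A) ` {v. v v* A \<in> dual_cone C} = dual_cone C"
    by (auto intro!: image_eqI[where x = "u v* B" for u] simp: vector_matrix_mul_assoc AB)
  have "(\<lambda>v. rank_w X (v v* A) z) ` {v. v v* A \<in> dual_cone C}
      = (\<lambda>w. rank_w X w z) ` ((\<lambda>v. v v* A) ` {v. v v* A \<in> dual_cone C})"
    by (simp add: image_image)
  also have "\<dots> = (\<lambda>w. rank_w X w z) ` dual_cone C"
    by (simp only: transpose_onto)
  finally show ?thesis
    unfolding rank_K_def dual_cone_matrix_image counts by simp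
qed

theorem proposition2p2:
  fixes X C :: "(real ^ 'd) set"
  assumes "CARD('d) \<ge> 2"
    and "finite X" and "card X \<ge> 2"
    and "proper_closed_convex_cone C"
  shows "(\<forall>w \<in> dual_cone C - {0}.
            ranking_function X C (\<lambda>z. real (rank_w X w z))
          \<and> ranking_function X C (\<lambda>z. real (rank_K X C z))
          \<and> (interior C \<noteq> {} \<longrightarrow>
                strict_ranking_function X C (\<lambda>z. real (rank_w X w z))
              \<and> strict_ranking_function X C (\<lambda>z. real (rank_K X C z))))
       \<and> (\<forall>(A :: real ^ 'd ^ 'd) (b :: real ^ 'd). invertible A \<longrightarrow>
            (\<forall>z. rank_K ((\<lambda>x. A *v x + b) ` X) ((\<lambda>c. A *v c) ` C) (A *v z + b)
                 = rank_K X C z))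
       \<and> (\<forall>D :: (real ^ 'd) set. closed_convex_cone D \<and> C \<subseteq> D \<longrightarrow>
            (\<forall>z. rank_K X C z \<le> rank_K X D z))
       \<and> (\<forall>w \<in> dual_cone C. \<forall>z. rank_K X C z \<le> rank_K X (halfspace_plus w) z)"
proof (intro conjI ballI allI impI)
  note fin = \<open>finite X\<close>
  have mono: "rank_w X w y \<le> rank_w X w z" if "w \<in> dual_cone C" "z - y \<in> C" for w y z
    using rank_w_mono[OF fin dual_cone_inner_mono[OF that]] .
  have strict: "rank_w X w y < rank_w X w z"
    if "w \<in> dual_cone C" "w \<noteq> 0" "z \<in> X" "z - y \<in> interior C" for w y z
    using rank_w_strict_mono[OF fin \<open>z \<in> X\<close> dual_cone_inner_strict_mono[OF that(1,2,4)]] .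
  fix w assume w: "w \<in> dual_cone C - {0}"
  show "ranking_function X C (\<lambda>z. real (rank_w X w z))"
    unfolding ranking_function_def using w mono by simp
  show "ranking_function X C (\<lambda>z. real (rank_K X C z))"
    unfolding ranking_function_def using rank_K_mono_of_rank_w_mono[OF fin mono] by simp
  show "strict_ranking_function X C (\<lambda>z. real (rank_w X w z))"
    unfolding strict_ranking_function_def using w strict by simp
  show "strict_ranking_function X C (\<lambda>z. real (rank_K X C z))"
    unfolding strict_ranking_function_def
  proof (intro ballI impI)
    fix y z assume "y \<in> X" "z \<in> X" "z - y \<in> interior C"
    then show "real (rank_K X C y) < real (rank_K X C z)"
      using w strict rank_K_strict_mono_of_rank_w_strict_mono[OF fin, of w C y z] by simp
  qed
next
  fix A :: "real ^ 'd ^ 'd" and b z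
  assume "invertible A"
  then show "rank_K ((\<lambda>x. A *v x + b) ` X) ((\<lambda>c. A *v c) ` C) (A *v z + b) = rank_K X C z"
    using rank_K_affine_image[OF \<open>finite X\<close>] by simp
next
  fix D :: "(real ^ 'd) set" and z
  assume "closed_convex_cone D \<and> C \<subseteq> D"
  then show "rank_K X C z \<le> rank_K X D z"
    using rank_K_mono_cone[OF \<open>finite X\<close>] by simp
next
  fix w z
  assume "w \<in> dual_cone C"
  then show "rank_K X C z \<le> rank_K X (halfspace_plus w) z"
    by (intro rank_K_mono_cone[OF \<open>finite X\<close>] subset_halfspace_plus_of_dual_cone)
qed

end
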